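(* Let $p,q$ be positive integers and $\hat e\ge 2$ an integer. The length of every cycle of the Cat map over $\mathbb{Z}_{2^{\hat e}}$ belongs to the set $\{1\}\cup\{2^k\cdot T_1: k=0,1,\dots,\hat e-1\}$, where $T_1=3$ if $p$ and $q$ are both odd, $T_1=2$ if exactly one of $p,q$ is odd, and $T_1=1$ if $p$ and $q$ are both even.
   Context: $\mathbf{C}=\begin{bmatrix}1 & p\\ q & 1+pq\end{bmatrix}$; the Cat map over $\mathbb{Z}_{2^{\hat e}}$ is the bijection $v\mapsto\mathbf{C}v\bmod 2^{\hat e}$ of $\mathbb{Z}_{2^{\hat e}}^2$; a cycle of length $n$ is the orbit of a point $v$ for which $n$ is the least positive integer with $\mathbf{C}^nv\equiv v\pmod{2^{\hat e}}$. *)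

theory Defs
  imports Main
begin

text \<open>Cat map C = [[1,p],[q,1+pq]] acting on Z_{2^e}^2, with residues represented
  by integers in {0..<2^e}.\<close>

definition cat_map :: "int \<Rightarrow> int \<Rightarrow> nat \<Rightarrow> int \<times> int \<Rightarrow> int \<times> int" where
  "cat_map p q e v = ((fst v + p * snd v) mod 2 ^ e,
                      (q * fst v + (1 + p * q) * snd v) mod 2 ^ e)"

definition residue_points :: "nat \<Rightarrow> (int \<times> int) set" where
  "residue_points e = {0..<2 ^ e} \<times> {0..<2 ^ e}"

definition cycle_length :: "int \<Rightarrow> int \<Rightarrow> nat \<Rightarrow> int \<times> int \<Rightarrow> nat" where
  "cycle_length p q e v = (LEAST n. 0 < n \<and> (cat_map p q e ^^ n) v = v)"

definition cat_T1 :: "int \<Rightarrow> int \<Rightarrow> nat" where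
  "cat_T1 p q = (if odd p \<and> odd q then 3 else if odd p \<or> odd q then 2 else 1)"

end

theory Submission
  imports Defs "HOL-Combinatorics.Cycles" "HOL-Computational_Algebra.Primes"
begin

text \<open>Write \<open>C\<close> for the integer matrix of the Cat map. Squaring a matrix congruent to the
  identity modulo an even \<open>m\<close> gives one congruent to the identity modulo \<open>2 m\<close>. Since
  \<open>C\<^bsup>T\<^sub>1\<^esup> \<equiv> I (mod 2)\<close>, it follows that \<open>C\<^bsup>T\<^sub>1 2\<^bsup>e-1\<^esup>\<^esup> \<equiv> I (mod 2\<^bsup>e\<^esup>)\<close>,
  so every cycle length divides \<open>T\<^sub>1 2\<^bsup>e-1\<^esup>\<close>. This already proves the claim, except that
  for \<open>T\<^sub>1 = 3\<close> a length \<open>2\<^bsup>i\<^esup>\<close> with \<open>i > 0\<close> must be excluded. In that case \<open>C\<^bsup>2\<^bsup>i\<^esup>\<^esup>\<close>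
  reduces modulo 2 to an element of order 3 of \<open>GL(2, \<int>/2)\<close>, so \<open>C\<^bsup>2\<^bsup>i\<^esup>\<^esup> - I\<close> has odd
  determinant and its only fixed point modulo \<open>2\<^bsup>e\<^esup>\<close> is the origin, a cycle of length 1.\<close>

datatype mat2 = Mat2 int int int int

instantiation mat2 :: monoid_mult
begin

fun times_mat2 :: "mat2 \<Rightarrow> mat2 \<Rightarrow> mat2" where
  "times_mat2 (Mat2 a b c d) (Mat2 a' b' c' d') =
     Mat2 (a * a' + b * c') (a * b' + b * d') (c * a' + d * c') (c * b' + d * d')"

definition one_mat2 :: mat2 where
  "one_mat2 = Mat2 1 0 0 1"

instance
proof
  fix A B C :: mat2
  show "A * B * C = A * (B * C)"
    by (cases A; cases B; cases C) (simp add: algebra_simps)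
  show "1 * A = A" and "A * 1 = A"
    by (cases A; simp add: one_mat2_def)+
qed

end

fun mat2_apply :: "mat2 \<Rightarrow> int \<times> int \<Rightarrow> int \<times> int" where
  "mat2_apply (Mat2 a b c d) (x, y) = (a * x + b * y, c * x + d * y)"

lemma mat2_apply_mult: "mat2_apply (A * B) v = mat2_apply A (mat2_apply B v)"
  by (cases A; cases B; cases v) (simp add: algebra_simps)

definition reduce_mod :: "int \<Rightarrow> int \<times> int \<Rightarrow> int \<times> int" where
  "reduce_mod m v = (fst v mod m, snd v mod m)"

lemma reduce_mod_mat2_apply_reduce_mod:
  "reduce_mod m (mat2_apply M (reduce_mod m v)) = reduce_mod m (mat2_apply M v)"
proof -
  have "(r * (x mod m) + s * (y mod m)) mod m = (r * x + s * y) mod m" for r s x y :: int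
    by (metis mod_add_eq mod_mult_right_eq)
  then show ?thesis
    by (cases M; cases v) (simp add: reduce_mod_def)
qed

lemma reduce_mod_residue_points: "v \<in> residue_points e \<Longrightarrow> reduce_mod (2 ^ e) v = v"
  by (cases v) (simp add: residue_points_def reduce_mod_def)

definition cat_matrix :: "int \<Rightarrow> int \<Rightarrow> mat2" where
  "cat_matrix p q = Mat2 1 p q (1 + p * q)"

lemma funpow_cat_map:
  assumes "v \<in> residue_points e"
  shows "(cat_map p q e ^^ n) v = reduce_mod (2 ^ e) (mat2_apply (cat_matrix p q ^ n) v)"
proof (induction n)
  case 0
  show ?case
    using reduce_mod_residue_points[OF assms] by (cases v) (simp add: one_mat2_def)
next
  case (Suc n)
  have cat_map_eq: "cat_map p q e w = reduce_mod (2 ^ e) (mat2_apply (cat_matrix p q) w)" for w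
    by (cases w) (simp add: cat_map_def cat_matrix_def reduce_mod_def)
  have "(cat_map p q e ^^ Suc n) v = cat_map p q e ((cat_map p q e ^^ n) v)"
    by simp
  also have "\<dots> = reduce_mod (2 ^ e) (mat2_apply (cat_matrix p q ^ Suc n) v)"
    unfolding Suc cat_map_eq by (simp add: reduce_mod_mat2_apply_reduce_mod mat2_apply_mult)
  finally show ?case .
qed

fun mat2_cong_one :: "int \<Rightarrow> mat2 \<Rightarrow> bool" where
  "mat2_cong_one m (Mat2 a b c d) \<longleftrightarrow> m dvd a - 1 \<and> m dvd b \<and> m dvd c \<and> m dvd d - 1"

lemma reduce_mod_mat2_apply_cong_one:
  assumes "mat2_cong_one m M"
  shows "reduce_mod m (mat2_apply M v) = reduce_mod m v"
proof -
  obtain a b c d where M: "M = Mat2 a b c d" by (cases M)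
  obtain x y where v: "v = (x, y)" by fastforce
  have "m dvd (a - 1) * x + b * y" and "m dvd c * x + (d - 1) * y"
    using assms by (simp_all add: M)
  moreover have "a * x + b * y - x = (a - 1) * x + b * y"
    and "c * x + d * y - y = c * x + (d - 1) * y"
    by (simp_all add: algebra_simps)
  ultimately have "m dvd a * x + b * y - x" and "m dvd c * x + d * y - y"
    by metis+
  then show ?thesis
    by (simp add: M v reduce_mod_def mod_eq_dvd_iff)
qed

lemma mat2_cong_one_square:
  assumes "even m" and "mat2_cong_one m M"
  shows "mat2_cong_one (2 * m) (M * M)"
proof -
  obtain a b c d where M: "M = Mat2 a b c d" by (cases M)
  obtain t where m: "m = 2 * t" using assms(1) by blast
  obtain \<alpha> \<beta> \<gamma> \<delta> where "a - 1 = m * \<alpha>" "b = m * \<beta>" "c = m * \<gamma>" "d - 1 = m * \<delta>"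
    using assms(2) by (auto simp: M elim!: dvdE)
  then have entries: "a = 1 + 2 * t * \<alpha>" "b = 2 * t * \<beta>" "c = 2 * t * \<gamma>" "d = 1 + 2 * t * \<delta>"
    by (simp_all add: m algebra_simps)
  \<comment> \<open>\<open>(I + m A)\<^sup>2 = I + 2 m A + m\<^sup>2 A\<^sup>2\<close>, and \<open>2 m\<close> divides \<open>m\<^sup>2\<close> because \<open>m\<close> is even\<close>
  have "a * a + b * c - 1 = 4 * t * (\<alpha> + t * (\<alpha> * \<alpha> + \<beta> * \<gamma>))"
    and "a * b + b * d = 4 * t * (\<beta> + t * \<beta> * (\<alpha> + \<delta>))"
    and "c * a + d * c = 4 * t * (\<gamma> + t * \<gamma> * (\<alpha> + \<delta>))"
    and "c * b + d * d - 1 = 4 * t * (\<delta> + t * (\<delta> * \<delta> + \<beta> * \<gamma>))"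
    unfolding entries by (simp_all add: algebra_simps)
  then show ?thesis
    by (simp add: M m)
qed

lemma cat_matrix_pow_T1_cong_one: "mat2_cong_one 2 (cat_matrix p q ^ cat_T1 p q)"
  by (cases "odd p"; cases "odd q")
    (simp_all add: cat_T1_def cat_matrix_def one_mat2_def numeral_3_eq_3 numeral_2_eq_2
      algebra_simps)

lemma cat_matrix_pow_cong_one:
  "mat2_cong_one (2 ^ Suc k) (cat_matrix p q ^ (cat_T1 p q * 2 ^ k))"
proof (induction k)
  case 0
  show ?case using cat_matrix_pow_T1_cong_one by simp
next
  case (Suc k)
  have "cat_matrix p q ^ (cat_T1 p q * 2 ^ Suc k)
      = cat_matrix p q ^ (cat_T1 p q * 2 ^ k) * cat_matrix p q ^ (cat_T1 p q * 2 ^ k)"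
    unfolding power_Suc mult_2 distrib_left by (rule power_add)
  with mat2_cong_one_square[OF _ Suc] show ?case
    by simp
qed

lemma cycle_length_eq_least_power: "cycle_length p q e v = least_power (cat_map p q e) v"
  by (simp add: cycle_length_def least_power_def conj_commute)

lemma cat_map_period:
  assumes "v \<in> residue_points e" and "e \<ge> 1"
  shows "(cat_map p q e ^^ (cat_T1 p q * 2 ^ (e - 1))) v = v"
proof -
  have "mat2_cong_one (2 ^ e) (cat_matrix p q ^ (cat_T1 p q * 2 ^ (e - 1)))"
    using cat_matrix_pow_cong_one[of "e - 1"] assms(2) by simp
  then show ?thesis
    by (simp add: funpow_cat_map assms(1) reduce_mod_mat2_apply_cong_one
        reduce_mod_residue_points)
qed

lemma cycle_length_dvd:
  assumes "v \<in> residue_points e" and "e \<ge> 1"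
  shows "cycle_length p q e v dvd cat_T1 p q * 2 ^ (e - 1)"
  unfolding cycle_length_eq_least_power
  using cat_map_period[OF assms] by (rule least_power_minimal)

lemma funpow_cycle_length:
  assumes "v \<in> residue_points e" and "e \<ge> 1"
  shows "(cat_map p q e ^^ cycle_length p q e v) v = v"
proof -
  have "cat_T1 p q * 2 ^ (e - 1) > 0"
    by (simp add: cat_T1_def)
  with cat_map_period[OF assms] show ?thesis
    unfolding cycle_length_eq_least_power by (rule least_powerI)
qed

lemma mat2_fixed_mod_imp_zero:
  assumes "coprime m ((a - 1) * (d - 1) - b * c)"
    and "reduce_mod m (mat2_apply (Mat2 a b c d) v) = reduce_mod m v"
  shows "reduce_mod m v = (0, 0)"
proof -
  obtain x y where v: "v = (x, y)" by fastforce
  define D where "D = (a - 1) * (d - 1) - b * c"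
  have u: "m dvd (a - 1) * x + b * y" and w: "m dvd c * x + (d - 1) * y"
    using assms(2) by (simp_all add: v reduce_mod_def mod_eq_dvd_iff algebra_simps)
  \<comment> \<open>multiplication by the adjugate of \<open>M - I\<close>\<close>
  have "D * x = (d - 1) * ((a - 1) * x + b * y) - b * (c * x + (d - 1) * y)"
    and "D * y = (a - 1) * (c * x + (d - 1) * y) - c * ((a - 1) * x + b * y)"
    by (simp_all add: D_def algebra_simps)
  with u w have "m dvd D * x" and "m dvd D * y"
    by simp_all
  with assms(1) have "m dvd x" and "m dvd y"
    by (simp_all add: D_def coprime_dvd_mult_right_iff)
  then show ?thesis
    by (simp add: v reduce_mod_def)
qed

text \<open>\<open>M\<close> reduces modulo 2 to one of the two elements of order 3 of \<open>GL(2, \<int>/2)\<close>; these are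
  exactly the matrices with odd off-diagonal entries and odd trace.\<close>

fun order3_mod2 :: "mat2 \<Rightarrow> bool" where
  "order3_mod2 (Mat2 a b c d) \<longleftrightarrow> odd b \<and> odd c \<and> odd (a + d)"

lemma order3_mod2_square: "order3_mod2 M \<Longrightarrow> order3_mod2 (M * M)"
  by (cases M) auto

lemma order3_mod2_cat_matrix_pow:
  assumes "odd p" and "odd q" and "k > 0"
  shows "order3_mod2 (cat_matrix p q ^ 2 ^ k)"
  using assms(3)
proof (induction k rule: nat_induct_non_zero)
  case 1
  show ?case using assms(1,2) by (simp add: cat_matrix_def power2_eq_square)
next
  case (Suc k)
  have "cat_matrix p q ^ 2 ^ Suc k = cat_matrix p q ^ 2 ^ k * cat_matrix p q ^ 2 ^ k"
    unfolding power_Suc mult_2 by (rule power_add)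
  with Suc show ?case
    by (simp add: order3_mod2_square)
qed

lemma order3_mod2_fixed_mod_imp_zero:
  assumes "order3_mod2 M" and "reduce_mod (2 ^ e) (mat2_apply M v) = reduce_mod (2 ^ e) v"
  shows "reduce_mod (2 ^ e) v = (0, 0)"
proof -
  obtain a b c d where M: "M = Mat2 a b c d" by (cases M)
  have "odd ((a - 1) * (d - 1) - b * c)"
    using assms(1) by (auto simp: M)
  then have "coprime ((2::int) ^ e) ((a - 1) * (d - 1) - b * c)"
    by (simp add: coprime_power_left_iff)
  then show ?thesis
    using assms(2) unfolding M by (rule mat2_fixed_mod_imp_zero)
qed

lemma cycle_length_pow2_imp_one:
  assumes "odd p" and "odd q" and "v \<in> residue_points e" and "e \<ge> 1"
    and "cycle_length p q e v = 2 ^ i"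
  shows "cycle_length p q e v = 1"
proof (cases "i = 0")
  case False
  have "order3_mod2 (cat_matrix p q ^ 2 ^ i)"
    using order3_mod2_cat_matrix_pow assms(1,2) False by blast
  moreover have "reduce_mod (2 ^ e) (mat2_apply (cat_matrix p q ^ 2 ^ i) v) = reduce_mod (2 ^ e) v"
    using funpow_cycle_length[OF assms(3,4), of p q] unfolding assms(5)
    by (simp add: funpow_cat_map assms(3) reduce_mod_residue_points)
  ultimately have "v = (0, 0)"
    using order3_mod2_fixed_mod_imp_zero reduce_mod_residue_points[OF assms(3)] by metis
  then have "cat_map p q e v = v"
    by (simp add: cat_map_def)
  then have "cycle_length p q e v \<le> 1"
    unfolding cycle_length_eq_least_power by (intro least_power_le) simp_all
  moreover have "(1::nat) \<le> 2 ^ i"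
    by simp
  ultimately show ?thesis
    using assms(5) by linarith
qed (use assms(5) in simp)

lemma dvd_three_mult_pow2:
  fixes n j :: nat
  assumes "n dvd 3 * 2 ^ j"
  obtains i where "i \<le> j" "n = 2 ^ i" | i where "i \<le> j" "n = 3 * 2 ^ i"
proof (cases "3 dvd n")
  case True
  then obtain m where m: "n = 3 * m" by blast
  with assms have "m dvd 2 ^ j" by simp
  then obtain i where "i \<le> j" "m = 2 ^ i"
    by (auto simp: divides_primepow_nat)
  with m that(2) show ?thesis by blast
next
  case False
  then have "coprime 3 n"
    by (intro prime_imp_coprime) simp_all
  with assms have "n dvd 2 ^ j"
    by (metis coprime_commute coprime_dvd_mult_right_iff)
  then obtain i where "i \<le> j" "n = 2 ^ i"
    by (auto simp: divides_primepow_nat)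
  with that(1) show ?thesis by blast
qed

theorem mainTheorem18:
  fixes p q :: int and e :: nat and v :: "int \<times> int"
  assumes "p > 0" and "q > 0" and "e \<ge> 2"
    and "v \<in> residue_points e"
  shows "cycle_length p q e v \<in> {1} \<union> {2 ^ k * cat_T1 p q | k. k \<le> e - 1}"
proof -
  have e: "e \<ge> 1" using assms(3) by simp
  have dvd: "cycle_length p q e v dvd cat_T1 p q * 2 ^ (e - 1)"
    using cycle_length_dvd[OF assms(4) e] .
  consider "odd p" "odd q" "cat_T1 p q = 3" | "cat_T1 p q = 2" | "cat_T1 p q = 1"
    unfolding cat_T1_def by (cases "odd p"; cases "odd q") simp_all
  then show ?thesis
  proof cases
    case 1
    from dvd obtain i where "i \<le> e - 1" and
      "cycle_length p q e v = 2 ^ i \<or> cycle_length p q e v = 3 * 2 ^ i"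
      by (auto simp: 1 elim: dvd_three_mult_pow2)
    with 1 cycle_length_pow2_imp_one[OF _ _ assms(4) e] show ?thesis
      by auto
  next
    case 2
    have "2 * 2 ^ (e - 1) = (2::nat) ^ e"
      using e by (cases e) simp_all
    with dvd 2 have "cycle_length p q e v dvd 2 ^ e"
      by simp
    then obtain i where "i \<le> e" "cycle_length p q e v = 2 ^ i"
      by (auto simp: divides_primepow_nat)
    with 2 show ?thesis
      by (cases i) auto
  next
    case 3
    with dvd obtain i where "i \<le> e - 1" "cycle_length p q e v = 2 ^ i"
      by (auto simp: divides_primepow_nat)
    with 3 show ?thesis
      by auto
  qed
qed

end
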